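(* Let $X$ be a complex Hilbert space with inner product $(\cdot,\cdot)_X$ and norm $\|\cdot\|_X$. Let $\mathbb{U}\ni\boldsymbol y\mapsto f(\boldsymbol y)\in X$ be $(\boldsymbol b,p,\varepsilon)$-holomorphic and continuous when $\mathbb{U}$ is equipped with the product topology. Then the map $\mathbb{U}\ni\boldsymbol y\mapsto\|f(\boldsymbol y)\|_X^2\in\mathbb{R}$ is $(\boldsymbol b,p,\varepsilon)$-holomorphic and continuous with the same $\boldsymbol b\in\ell^p(\mathbb{N})$, $p\in(0,1)$ and $\varepsilon>0$.
   Context: $\mathbb{U}=[-1,1]^{\mathbb{N}}$. For $s>1$ let $\mathcal{E}_s=\{(z+z^{-1})/2: z\in\mathbb{C},\ 1\le|z|\le s\}$; for a sequence $\boldsymbol\rho=(\rho_j)_{j\ge1}$ with $\rho_j>1$ let $\mathcal{E}_{\boldsymbol\rho}=\bigotimes_{j\ge1}\mathcal{E}_{\rho_j}$ and $\mathcal{O}_{\boldsymbol\rho}=\bigotimes_{j\ge1}\mathcal{O}_{\rho_j}$ with $\mathcal{O}_{\rho}=\{z\in\mathbb{C}:\operatorname{dist}(z,[-1,1])<\rho-1\}$. For a complex Banach space $Y$, $\boldsymbol b\in\ell^p(\mathbb{N})$ with $p\in(0,1)$ (nonincreasing) and $\varepsilon>0$, a map $g:\mathbb{U}\to Y$ is $(\boldsymbol b,p,\varepsilon)$-holomorphic if: (1) it is uniformly bounded on $\mathbb{U}$; (2) for every sequence $\boldsymbol\rho$ of numbers strictly larger than one with $\sum_{j\ge1}(\rho_j-1)b_j\le\varepsilon$,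 $g$ admits an extension $\boldsymbol z\mapsto g(\boldsymbol z)$ to $\mathcal{O}_{\boldsymbol\rho}$ that is holomorphic with respect to each variable $z_j$; (3) there is $C_\varepsilon>0$ with $\sup_{\boldsymbol z\in\mathcal{E}_{\boldsymbol\rho}}\|g(\boldsymbol z)\|_Y\le C_\varepsilon$. For real-valued maps, $Y=\mathbb{C}$ is used for the extension. *)

theory Defs
  imports "HOL-Analysis.Analysis"
begin

text \<open>A complex vector space structure on a real normed space is encoded by a
real-linear map J playing the role of multiplication by the imaginary unit:
(a + i b) x = a x + b (J x).  For the scalar field itself, J = (\<lambda>z. \<i> * z).\<close>

definition cscale :: "('y::real_vector \<Rightarrow> 'y) \<Rightarrow> complex \<Rightarrow> 'y \<Rightarrow> 'y" where
  "cscale J c x = Re c *\<^sub>R x + Im c *\<^sub>R J x"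

definition cdifferentiable_at ::
  "('y::real_normed_vector \<Rightarrow> 'y) \<Rightarrow> (complex \<Rightarrow> 'y) \<Rightarrow> complex \<Rightarrow> bool" where
  "cdifferentiable_at J F w \<longleftrightarrow> (\<exists>v. (F has_derivative (\<lambda>h. cscale J h v)) (at w))"

definition UU :: "(nat \<Rightarrow> real) set" where
  "UU = {y. \<forall>j. \<bar>y j\<bar> \<le> 1}"

definition bernstein_ellipse :: "real \<Rightarrow> complex set" where
  "bernstein_ellipse s = {(z + inverse z) / 2 | z. 1 \<le> norm z \<and> norm z \<le> s}"

definition interval_nbhd :: "real \<Rightarrow> complex set" where
  "interval_nbhd r = {z. infdist z (complex_of_real ` {-1..1}) < r - 1}"

definition poly_ellipse :: "(nat \<Rightarrow> real) \<Rightarrow> (nat \<Rightarrow> complex) set" where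
  "poly_ellipse \<rho> = {z. \<forall>j. z j \<in> bernstein_ellipse (\<rho> j)}"

definition poly_nbhd :: "(nat \<Rightarrow> real) \<Rightarrow> (nat \<Rightarrow> complex) set" where
  "poly_nbhd \<rho> = {z. \<forall>j. z j \<in> interval_nbhd (\<rho> j)}"

text \<open>The standing conditions on b, p, \<epsilon> are hypotheses of the theorem.
The sum condition is: \<Sum>(\<rho>_j - 1) b_j \<le> \<epsilon> (a series of nonnegative terms, so it
means summable with sum \<le> \<epsilon>).\<close>
definition bpe_holomorphic ::
  "('y::real_normed_vector \<Rightarrow> 'y) \<Rightarrow> (nat \<Rightarrow> real) \<Rightarrow> real \<Rightarrow> ((nat \<Rightarrow> real) \<Rightarrow> 'y) \<Rightarrow> bool" where
  "bpe_holomorphic J b \<epsilon> g \<longleftrightarrow>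
     (\<exists>C. \<forall>y\<in>UU. norm (g y) \<le> C) \<and>
     (\<exists>C\<^sub>\<epsilon>>0. \<forall>\<rho>. (\<forall>j. \<rho> j > 1) \<and> summable (\<lambda>j. (\<rho> j - 1) * b j)
                    \<and> (\<Sum>j. (\<rho> j - 1) * b j) \<le> \<epsilon> \<longrightarrow>
        (\<exists>G :: (nat \<Rightarrow> complex) \<Rightarrow> 'y.
            (\<forall>y\<in>UU. G (\<lambda>j. complex_of_real (y j)) = g y) \<and>
            (\<forall>z\<in>poly_nbhd \<rho>. \<forall>j. \<forall>w\<in>interval_nbhd (\<rho> j). cdifferentiable_at J (\<lambda>u. G (z(j := u))) w) \<and>
            (\<forall>z\<in>poly_ellipse \<rho>. norm (G z) \<le> C\<^sub>\<epsilon>)))"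

end

(* The holomorphic extension G of f is paired with its reflection: K z = (G z, G (conj z))_X.
   Restricted to real parameters, K is the squared norm of f.  In each variable
   u \<mapsto> G ((conj z)(j := conj u)) is antiholomorphic, and the inner product is antilinear in its second
   argument, so K is holomorphic in each variable.  The Bernstein ellipses and the neighbourhoods of
   [-1,1] are symmetric under conjugation, so both factors are controlled on the same polyellipse,
   giving the bound 2 C\<^sup>2 by Cauchy-Schwarz. *)

theory Submission
  imports Defs
begin

definition bpe_admissible :: "(nat \<Rightarrow> real) \<Rightarrow> real \<Rightarrow> (nat \<Rightarrow> real) \<Rightarrow> bool" where
  "bpe_admissible b \<epsilon> \<rho> \<longleftrightarrow>
     (\<forall>j. \<rho> j > 1) \<and> summable (\<lambda>j. (\<rho> j - 1) * b j) \<and> (\<Sum>j. (\<rho> j - 1) * b j) \<le> \<epsilon>"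

definition separately_cdifferentiable_on ::
  "('y::real_normed_vector \<Rightarrow> 'y) \<Rightarrow> (nat \<Rightarrow> real) \<Rightarrow> ((nat \<Rightarrow> complex) \<Rightarrow> 'y) \<Rightarrow> bool" where
  "separately_cdifferentiable_on J \<rho> G \<longleftrightarrow>
     (\<forall>z\<in>poly_nbhd \<rho>. \<forall>j. \<forall>w\<in>interval_nbhd (\<rho> j). cdifferentiable_at J (\<lambda>u. G (z(j := u))) w)"

lemma bpe_holomorphic_iff:
  "bpe_holomorphic J b \<epsilon> g \<longleftrightarrow>
     (\<exists>C. \<forall>y\<in>UU. norm (g y) \<le> C) \<and>
     (\<exists>C\<^sub>\<epsilon>>0. \<forall>\<rho>. bpe_admissible b \<epsilon> \<rho> \<longrightarrow>
        (\<exists>G. (\<forall>y\<in>UU. G (\<lambda>j. complex_of_real (y j)) = g y) \<and>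
             separately_cdifferentiable_on J \<rho> G \<and>
             (\<forall>z\<in>poly_ellipse \<rho>. norm (G z) \<le> C\<^sub>\<epsilon>)))"
  unfolding bpe_holomorphic_def bpe_admissible_def separately_cdifferentiable_on_def ..

lemma cscale_complex_mult: "cscale (\<lambda>z. \<i> * z) c x = c * x"
  unfolding cscale_def by (simp add: complex_eq_iff)

lemma cdifferentiable_at_complex_iff:
  "cdifferentiable_at (\<lambda>z. \<i> * z) F w \<longleftrightarrow> F field_differentiable (at w)"
  unfolding cdifferentiable_at_def field_differentiable_def has_field_derivative_def cscale_complex_mult
  by (simp add: mult.commute)

lemma has_derivative_cnj_reflect:
  assumes "(F has_derivative (\<lambda>h. cscale J h v)) (at (cnj w))"
  shows "((\<lambda>u. F (cnj u)) has_derivative (\<lambda>h. cscale J (cnj h) v)) (at w)"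
  using diff_chain_at[OF bounded_linear_imp_has_derivative[OF bounded_linear_cnj] assms]
  by (simp add: o_def)

lemma infdist_cnj_image: "infdist (cnj z) (cnj ` A) = infdist z A"
  unfolding infdist_def by (simp add: image_image dist_norm flip: complex_cnj_diff)

lemma cnj_interval_nbhd: "w \<in> interval_nbhd r \<Longrightarrow> cnj w \<in> interval_nbhd r"
proof -
  have "cnj ` complex_of_real ` {-1..1} = complex_of_real ` {-1..1}"
    by (simp add: image_image)
  then show "w \<in> interval_nbhd r \<Longrightarrow> cnj w \<in> interval_nbhd r"
    unfolding interval_nbhd_def by (metis infdist_cnj_image mem_Collect_eq)
qed

lemma cnj_bernstein_ellipse: "w \<in> bernstein_ellipse r \<Longrightarrow> cnj w \<in> bernstein_ellipse r"
proof -
  assume "w \<in> bernstein_ellipse r"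
  then obtain z where z: "w = (z + inverse z) / 2" "1 \<le> norm z" "norm z \<le> r"
    unfolding bernstein_ellipse_def by auto
  have "cnj w = (cnj z + inverse (cnj z)) / 2" by (simp add: z complex_cnj_inverse)
  then show ?thesis unfolding bernstein_ellipse_def using z by force
qed

lemma cnj_comp_poly_nbhd: "z \<in> poly_nbhd \<rho> \<Longrightarrow> cnj \<circ> z \<in> poly_nbhd \<rho>"
  by (simp add: poly_nbhd_def cnj_interval_nbhd)

lemma cnj_comp_poly_ellipse: "z \<in> poly_ellipse \<rho> \<Longrightarrow> cnj \<circ> z \<in> poly_ellipse \<rho>"
  by (simp add: poly_ellipse_def cnj_bernstein_ellipse)

locale isometric_complex_structure =
  fixes J :: "'x::real_inner \<Rightarrow> 'x"
  assumes linear_J: "linear J"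
    and J_J: "\<And>x. J (J x) = - x"
    and inner_J_J: "\<And>x y. inner (J x) (J y) = inner x y"
begin

lemma norm_J: "norm (J x) = norm x"
  using inner_J_J[of x x] by (simp add: norm_eq_sqrt_inner)

lemma J_add: "J (x + y) = J x + J y" and J_scaleR: "J (a *\<^sub>R x) = a *\<^sub>R J x"
  using linear_J by (auto simp: linear_add linear_scale)

lemma inner_J_left: "inner (J x) y = - inner x (J y)"
  using inner_J_J[of "J x" y] J_J[of x] by simp

lemma inner_J_self: "inner x (J x) = 0"
  using inner_J_left[of x x] by (simp add: inner_commute)

text \<open>With \<open>J\<close> as multiplication by \<open>\<i>\<close>, this is the complex inner product \<open>(x, y)\<^sub>X\<close>.\<close>

definition cinner :: "'x \<Rightarrow> 'x \<Rightarrow> complex" where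
  "cinner x y = complex_of_real (inner x y) + \<i> * complex_of_real (inner x (J y))"

lemma cinner_self: "cinner x x = complex_of_real ((norm x)\<^sup>2)"
  by (simp add: cinner_def inner_J_self power2_norm_eq_inner)

lemma norm_cinner_le: "norm (cinner x y) \<le> 2 * norm x * norm y"
proof -
  have "norm (cinner x y) \<le> \<bar>inner x y\<bar> + \<bar>inner x (J y)\<bar>"
    unfolding cinner_def by (rule order_trans[OF norm_triangle_ineq]) (simp add: norm_mult)
  also have "\<dots> \<le> norm x * norm y + norm x * norm (J y)"
    by (intro add_mono Cauchy_Schwarz_ineq2)
  finally show ?thesis by (simp add: norm_J)
qed

lemma bounded_bilinear_cinner: "bounded_bilinear cinner"
proof (rule bounded_bilinear.intro)
  show "\<exists>K. \<forall>x y. norm (cinner x y) \<le> norm x * norm y * K"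
    using norm_cinner_le by (metis mult.commute mult.left_commute)
qed (simp_all add: cinner_def inner_add_left inner_add_right J_add J_scaleR scaleR_conv_of_real
    algebra_simps)

lemma cinner_cscale_left: "cinner (cscale J c x) y = c * cinner x y"
  by (simp add: cinner_def cscale_def inner_add_left inner_J_left inner_J_J J_J complex_eq_iff
      algebra_simps)

lemma cinner_cscale_right: "cinner x (cscale J c y) = cnj c * cinner x y"
proof -
  have J_cscale: "J (cscale J c y) = Re c *\<^sub>R J y - Im c *\<^sub>R y"
    by (simp add: cscale_def J_add J_scaleR J_J)
  show ?thesis
    unfolding cinner_def J_cscale
    by (simp add: cscale_def inner_add_right inner_diff_right complex_eq_iff algebra_simps)
qed

lemma has_field_derivative_cinner:
  assumes "(F has_derivative (\<lambda>h. cscale J h v)) (at w)"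
    and "(H has_derivative (\<lambda>h. cscale J (cnj h) v')) (at w)"
  shows "((\<lambda>u. cinner (F u) (H u)) has_field_derivative (cinner v (H w) + cinner (F w) v')) (at w)"
proof -
  have "(\<lambda>h. cinner (F w) (cscale J (cnj h) v') + cinner (cscale J h v) (H w))
      = (\<lambda>h. (cinner v (H w) + cinner (F w) v') * h)"
    by (simp add: cinner_cscale_left cinner_cscale_right fun_eq_iff algebra_simps)
  then show ?thesis
    using bounded_bilinear.FDERIV[OF bounded_bilinear_cinner assms]
    by (simp add: has_field_derivative_def)
qed

lemma separately_cdifferentiable_cinner_reflect:
  assumes "separately_cdifferentiable_on J \<rho> G"
  shows "separately_cdifferentiable_on (\<lambda>z. \<i> * z) \<rho> (\<lambda>z. cinner (G z) (G (cnj \<circ> z)))"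
  unfolding separately_cdifferentiable_on_def cdifferentiable_at_complex_iff
proof (intro ballI allI)
  fix z j w
  assume z: "z \<in> poly_nbhd \<rho>" and w: "w \<in> interval_nbhd (\<rho> j)"
  obtain v where v: "((\<lambda>u. G (z(j := u))) has_derivative (\<lambda>h. cscale J h v)) (at w)"
    using assms z w unfolding separately_cdifferentiable_on_def cdifferentiable_at_def by blast
  obtain v' where "((\<lambda>u. G ((cnj \<circ> z)(j := u))) has_derivative (\<lambda>h. cscale J h v')) (at (cnj w))"
    using assms cnj_comp_poly_nbhd[OF z] cnj_interval_nbhd[OF w]
    unfolding separately_cdifferentiable_on_def cdifferentiable_at_def by blast
  then have "((\<lambda>u. G ((cnj \<circ> z)(j := cnj u))) has_derivative (\<lambda>h. cscale J (cnj h) v')) (at w)"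
    by (rule has_derivative_cnj_reflect)
  moreover have "cnj \<circ> z(j := u) = (cnj \<circ> z)(j := cnj u)" for u
    by auto
  ultimately show "(\<lambda>u. cinner (G (z(j := u))) (G (cnj \<circ> z(j := u)))) field_differentiable at w"
    using has_field_derivative_cinner[OF v] unfolding field_differentiable_def by auto
qed

lemma bpe_holomorphic_norm_squared:
  assumes "bpe_holomorphic J b \<epsilon> f"
  shows "bpe_holomorphic (\<lambda>z. \<i> * z) b \<epsilon> (\<lambda>y. complex_of_real ((norm (f y))\<^sup>2))"
proof -
  obtain C\<^sub>0 C where bounded: "\<forall>y\<in>UU. norm (f y) \<le> C\<^sub>0" and "C > 0"
    and extension: "\<And>\<rho>. bpe_admissible b \<epsilon> \<rho> \<Longrightarrow>
      \<exists>G. (\<forall>y\<in>UU. G (\<lambda>j. complex_of_real (y j)) = f y) \<and> separately_cdifferentiable_on J \<rho> G \<and>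
          (\<forall>z\<in>poly_ellipse \<rho>. norm (G z) \<le> C)"
    using assms unfolding bpe_holomorphic_iff by blast
  have "\<forall>y\<in>UU. norm (complex_of_real ((norm (f y))\<^sup>2)) \<le> C\<^sub>0\<^sup>2"
    using bounded by (simp add: power_mono del: of_real_power)
  moreover have "\<exists>K. (\<forall>y\<in>UU. K (\<lambda>j. complex_of_real (y j)) = complex_of_real ((norm (f y))\<^sup>2)) \<and>
      separately_cdifferentiable_on (\<lambda>z. \<i> * z) \<rho> K \<and> (\<forall>z\<in>poly_ellipse \<rho>. norm (K z) \<le> 2 * C\<^sup>2)"
    if admissible: "bpe_admissible b \<epsilon> \<rho>" for \<rho>
  proof -
    obtain G where G_ext: "\<forall>y\<in>UU. G (\<lambda>j. complex_of_real (y j)) = f y"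
      and G_holo: "separately_cdifferentiable_on J \<rho> G"
      and G_bounded: "\<forall>z\<in>poly_ellipse \<rho>. norm (G z) \<le> C"
      using extension[OF admissible] by blast
    have "norm (cinner (G z) (G (cnj \<circ> z))) \<le> 2 * C\<^sup>2" if "z \<in> poly_ellipse \<rho>" for z
    proof -
      have "norm (cinner (G z) (G (cnj \<circ> z))) \<le> 2 * norm (G z) * norm (G (cnj \<circ> z))"
        by (rule norm_cinner_le)
      also have "\<dots> \<le> 2 * C * C"
        using G_bounded that cnj_comp_poly_ellipse[OF that] \<open>C > 0\<close>
        by (intro mult_left_mono mult_mono) auto
      finally show ?thesis by (simp add: power2_eq_square)
    qed
    moreover have "\<forall>y\<in>UU. G (cnj \<circ> (\<lambda>j. complex_of_real (y j))) = f y"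
      using G_ext by (simp add: comp_def)
    ultimately show ?thesis
      using G_ext separately_cdifferentiable_cinner_reflect[OF G_holo] cinner_self
      by (intro exI[of _ "\<lambda>z. cinner (G z) (G (cnj \<circ> z))"]) simp
  qed
  moreover have "2 * C\<^sup>2 > 0"
    using \<open>C > 0\<close> by simp
  ultimately show ?thesis
    unfolding bpe_holomorphic_iff by blast
qed

end

theorem lemmaA1:
  fixes J :: "'x::{real_inner, complete_space} \<Rightarrow> 'x"
    and f :: "(nat \<Rightarrow> real) \<Rightarrow> 'x"
    and b :: "nat \<Rightarrow> real" and p \<epsilon> :: real
  assumes J_linear: "linear J"
    and J_square: "\<And>x. J (J x) = - x"
    and J_isometric: "\<And>x y. inner (J x) (J y) = inner x y"
    and p: "0 < p" "p < 1"
    and b_lp: "summable (\<lambda>j. \<bar>b j\<bar> powr p)"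
    and b_noninc: "decseq b"
    and eps: "\<epsilon> > 0"
    and f_holo: "bpe_holomorphic J b \<epsilon> f"
    and f_cont: "continuous_on UU f"
  shows "bpe_holomorphic (\<lambda>z::complex. \<i> * z) b \<epsilon> (\<lambda>y. complex_of_real ((norm (f y))\<^sup>2))
         \<and> continuous_on UU (\<lambda>y. (norm (f y))\<^sup>2)"
proof
  \<comment> \<open>The conditions on \<open>b\<close>, \<open>p\<close> and \<open>\<epsilon>\<close> are standing assumptions of the setting.\<close>
  interpret isometric_complex_structure J
    using J_linear J_square J_isometric by (simp add: isometric_complex_structure_def)
  show "bpe_holomorphic (\<lambda>z::complex. \<i> * z) b \<epsilon> (\<lambda>y. complex_of_real ((norm (f y))\<^sup>2))"
    using f_holo by (rule bpe_holomorphic_norm_squared)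
  show "continuous_on UU (\<lambda>y. (norm (f y))\<^sup>2)"
    using f_cont by (intro continuous_intros)
qed

end
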